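(* Let $p\ge5$, $n\ge 0$, and let $\mu<\nu$ be two integers in $\{M_{n-1}+1,\dots,M_n\}$ whose metallic codes both end with the digit $0$, such that no integer strictly between $\mu$ and $\nu$ has a metallic code ending with $0$. Then $\nu-\mu=p-3$ if and only if the metallic code of $\nu$ ends with at least two zeros (i.e. is of the form $w\,0^k$ with $k\ge 2$); otherwise $\nu-\mu=p-2$.
   Context: $p\ge5$ is a fixed integer. Metallic numbers: $m_{-1}=0$, $m_0=1$, $m_{n+2}=(p-2)m_{n+1}-m_n$; $M_n=\sum_{k=0}^n m_k$ and $M_{-1}=0$. Write $d=p-3$, $c=p-4$. The metallic code of a positive integer $n$ is the unique word $a_k\cdots a_0$ over the digits $\{0,\dots,p-3\}$ with $a_k\neq 0$, $n=\sum_i a_i m_i$, and containing no factor $d\,c^j\,d$ ($j\ge0$). (The set $\{M_{n-1}+1,\dots,M_n\}$ is the level $n$ of the white metallic tree.) *)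

theory Defs
  imports Main
begin

text \<open>Metallic numbers m_0 = 1, m_1 = (p-2) m_0 - m_{-1} = p - 2,
  m_{n+2} = (p-2) m_{n+1} - m_n  (computed in int, so no truncation).\<close>
fun metallic :: "nat \<Rightarrow> nat \<Rightarrow> int" where
  "metallic p 0 = 1"
| "metallic p (Suc 0) = int p - 2"
| "metallic p (Suc (Suc n)) = (int p - 2) * metallic p (Suc n) - metallic p n"

text \<open>Mprev p k = M_{k-1} = sum_{i<k} m_i; so M_{-1} = Mprev p 0 = 0.\<close>
definition Mprev :: "nat \<Rightarrow> nat \<Rightarrow> int" where
  "Mprev p k = (\<Sum>i<k. metallic p i)"

definition level :: "nat \<Rightarrow> nat \<Rightarrow> int set" where
  "level p n = {Mprev p n + 1 .. Mprev p (Suc n)}"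

text \<open>Words are stored little-endian: ds ! i is the digit a_i, so the last
  list element is the leading digit a_k.\<close>
definition word_value :: "nat \<Rightarrow> nat list \<Rightarrow> int" where
  "word_value p ds = (\<Sum>i<length ds. int (ds ! i) * metallic p i)"

text \<open>Contains a factor d c^j d with d = p-3, c = p-4, j \<ge> 0
  (the pattern is a palindrome, so the reading direction is irrelevant).\<close>
definition has_forbidden_factor :: "nat \<Rightarrow> nat list \<Rightarrow> bool" where
  "has_forbidden_factor p ds \<longleftrightarrow>
     (\<exists>i j. i + j + 1 < length ds \<and> ds ! i = p - 3 \<and> ds ! (i + j + 1) = p - 3 \<and>
        (\<forall>t. i < t \<and> t < i + j + 1 \<longrightarrow> ds ! t = p - 4))"

definition is_metallic_code :: "nat \<Rightarrow> nat list \<Rightarrow> bool" where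
  "is_metallic_code p ds \<longleftrightarrow>
     ds \<noteq> [] \<and> last ds \<noteq> 0 \<and> (\<forall>x\<in>set ds. x \<le> p - 3) \<and>
     \<not> has_forbidden_factor p ds"

definition metallic_code :: "nat \<Rightarrow> int \<Rightarrow> nat list" where
  "metallic_code p n = (THE ds. is_metallic_code p ds \<and> word_value p ds = n)"

definition code_ends_with_0 :: "nat \<Rightarrow> int \<Rightarrow> bool" where
  "code_ends_with_0 p n \<longleftrightarrow> (let ds = metallic_code p n in ds \<noteq> [] \<and> ds ! 0 = 0)"

definition code_ends_with_00 :: "nat \<Rightarrow> int \<Rightarrow> bool" where
  "code_ends_with_00 p n \<longleftrightarrow>
     (let ds = metallic_code p n in 2 \<le> length ds \<and> ds ! 0 = 0 \<and> ds ! 1 = 0)"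

end

theory Submission
  imports Defs
begin

(*
  Metallic codes form the greedy numeration system of the recurrence
  m_(k+1) = (p-2) m_k - m_(k-1): the admissible words of length k (digits at most d, no factor
  d c^j d) take every value in [0, m_k) exactly once, and those that may still be followed by the
  digit d take exactly the values in [0, m_k - m_(k-1)). Hence every positive integer has a
  unique code.

  Let the code of mu be w0. For 0 < k <= d the word wk is again a code, so the code of mu + k
  does not end with 0, unless k = d and w = v d c^j. In that case the suffix d c^j d has value
  m_(j+2), so the code of mu + d is v' 0^(j+2); otherwise mu + (p-2) = mu + m_1 has the code
  w' 0. Here x' is x with its last digit increased by 1 (and 1 if x is empty).
*)

definition forbidden_factor :: "nat \<Rightarrow> nat list \<Rightarrow> bool" where
  "forbidden_factor p ds \<longleftrightarrow> (\<exists>u j v. ds = u @ [p-3] @ replicate j (p-4) @ [p-3] @ v)"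

(* Words are little-endian, so has_cd_prefix p w says that the written word w ends with d c^j. *)
definition has_cd_prefix :: "nat \<Rightarrow> nat list \<Rightarrow> bool" where
  "has_cd_prefix p xs \<longleftrightarrow> (\<exists>j v. xs = replicate j (p-4) @ (p-3) # v)"

lemma has_cd_prefix_Nil [simp]: "\<not> has_cd_prefix p []"
  by (simp add: has_cd_prefix_def)

lemma has_cd_prefix_Cons [simp]:
  "has_cd_prefix p (x # xs) \<longleftrightarrow> x = p-3 \<or> (x = p-4 \<and> has_cd_prefix p xs)"
proof
  assume "has_cd_prefix p (x # xs)"
  then obtain j v where "x # xs = replicate j (p-4) @ (p-3) # v"
    by (auto simp: has_cd_prefix_def)
  then show "x = p-3 \<or> (x = p-4 \<and> has_cd_prefix p xs)"
    by (cases j) (auto simp: has_cd_prefix_def)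
next
  assume "x = p-3 \<or> (x = p-4 \<and> has_cd_prefix p xs)"
  then show "has_cd_prefix p (x # xs)"
  proof
    assume "x = p-3"
    then show ?thesis
      unfolding has_cd_prefix_def by (intro exI[of _ 0]) auto
  next
    assume "x = p-4 \<and> has_cd_prefix p xs"
    then obtain j v where "x = p-4" "xs = replicate j (p-4) @ (p-3) # v"
      by (auto simp: has_cd_prefix_def)
    then show ?thesis
      unfolding has_cd_prefix_def by (intro exI[of _ "Suc j"]) auto
  qed
qed

lemma forbidden_factor_Nil [simp]: "\<not> forbidden_factor p []"
  by (simp add: forbidden_factor_def)

lemma forbidden_factor_Cons:
  "forbidden_factor p (x # xs) \<longleftrightarrow> forbidden_factor p xs \<or> (x = p-3 \<and> has_cd_prefix p xs)"
proof
  assume "forbidden_factor p (x # xs)"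
  then obtain u j v where "x # xs = u @ [p-3] @ replicate j (p-4) @ [p-3] @ v"
    by (auto simp: forbidden_factor_def)
  then show "forbidden_factor p xs \<or> (x = p-3 \<and> has_cd_prefix p xs)"
    by (cases u) (force simp: has_cd_prefix_def, auto simp: forbidden_factor_def)
next
  assume "forbidden_factor p xs \<or> (x = p-3 \<and> has_cd_prefix p xs)"
  then show "forbidden_factor p (x # xs)"
  proof
    assume "forbidden_factor p xs"
    then obtain u j v where "xs = u @ [p-3] @ replicate j (p-4) @ [p-3] @ v"
      by (auto simp: forbidden_factor_def)
    then show ?thesis
      unfolding forbidden_factor_def by (intro exI[of _ "x # u"]) auto
  next
    assume "x = p-3 \<and> has_cd_prefix p xs"
    then obtain j v where "x = p-3" "xs = replicate j (p-4) @ (p-3) # v"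
      by (auto simp: has_cd_prefix_def)
    then show ?thesis
      unfolding forbidden_factor_def by (intro exI[of _ "[]"]) auto
  qed
qed

lemma forbidden_factor_rev [simp]: "forbidden_factor p (rev xs) \<longleftrightarrow> forbidden_factor p xs"
proof -
  have *: "forbidden_factor p (rev ys)" if "forbidden_factor p ys" for ys
  proof -
    from that obtain u j v where "ys = u @ [p-3] @ replicate j (p-4) @ [p-3] @ v"
      by (auto simp: forbidden_factor_def)
    then have "rev ys = rev v @ [p-3] @ replicate j (p-4) @ [p-3] @ rev u"
      by simp
    then show ?thesis
      unfolding forbidden_factor_def by blast
  qed
  show ?thesis
    using *[of xs] *[of "rev xs"] by auto
qed

lemma forbidden_factor_snoc:
  "forbidden_factor p (xs @ [x]) \<longleftrightarrow>
     forbidden_factor p xs \<or> (x = p-3 \<and> has_cd_prefix p (rev xs))"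
  using forbidden_factor_Cons[of p x "rev xs"] forbidden_factor_rev[of p "x # rev xs"] by simp

lemma forbidden_factor_replicate_0:
  assumes "5 \<le> p"
  shows "forbidden_factor p (replicate n 0 @ xs) \<longleftrightarrow> forbidden_factor p xs"
  using assms by (induction n) (auto simp: forbidden_factor_Cons)

lemma has_forbidden_factor_iff: "has_forbidden_factor p ds \<longleftrightarrow> forbidden_factor p ds"
proof
  assume "has_forbidden_factor p ds"
  then obtain i j where ij: "i + j + 1 < length ds" "ds ! i = p - 3" "ds ! (i + j + 1) = p - 3"
    and cs: "\<forall>t. i < t \<and> t < i + j + 1 \<longrightarrow> ds ! t = p - 4"
    unfolding has_forbidden_factor_def by blast
  have cj: "take j (drop (Suc i) ds) = replicate j (p-4)"
    using ij(1) cs by (auto simp: list_eq_iff_nth_eq)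
  have "drop i ds = ds ! i # drop (Suc i) ds"
    using ij(1) by (simp add: Cons_nth_drop_Suc)
  also have "drop (Suc i) ds = take j (drop (Suc i) ds) @ drop j (drop (Suc i) ds)"
    by (rule append_take_drop_id[symmetric])
  also have "drop j (drop (Suc i) ds) = ds ! (i + j + 1) # drop (i + j + 2) ds"
    using ij(1) by (simp add: Cons_nth_drop_Suc add.commute)
  finally have "ds = take i ds @ [p-3] @ replicate j (p-4) @ [p-3] @ drop (i + j + 2) ds"
    using ij(2,3) cj by (metis append_Cons append_Nil append_take_drop_id)
  then show "forbidden_factor p ds"
    unfolding forbidden_factor_def by blast
next
  assume "forbidden_factor p ds"
  then obtain u j v where ds: "ds = u @ [p-3] @ replicate j (p-4) @ [p-3] @ v"
    by (auto simp: forbidden_factor_def)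
  show "has_forbidden_factor p ds"
    unfolding has_forbidden_factor_def
    by (rule exI[of _ "length u"], rule exI[of _ j]) (auto simp: ds nth_append)
qed

section \<open>Admissible words and their values\<close>

definition admissible :: "nat \<Rightarrow> nat list \<Rightarrow> bool" where
  "admissible p xs \<longleftrightarrow> (\<forall>x\<in>set xs. x \<le> p-3) \<and> \<not> forbidden_factor p xs"

lemma admissible_Nil [simp]: "admissible p []"
  by (simp add: admissible_def)

lemma admissible_Cons:
  "admissible p (x # xs) \<longleftrightarrow>
     x \<le> p-3 \<and> admissible p xs \<and> \<not> (x = p-3 \<and> has_cd_prefix p xs)"
  by (auto simp: admissible_def forbidden_factor_Cons)

lemma admissible_snoc:
  "admissible p (xs @ [x]) \<longleftrightarrow>
     x \<le> p-3 \<and> admissible p xs \<and> \<not> (x = p-3 \<and> has_cd_prefix p (rev xs))"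
  by (auto simp: admissible_def forbidden_factor_snoc)

lemma admissible_append_suffix: "admissible p (xs @ ys) \<Longrightarrow> admissible p ys"
  unfolding admissible_def forbidden_factor_def by (metis Un_iff append.assoc set_append)

lemma admissible_snoc_d:
  "admissible p (xs @ [x, p-3]) \<longleftrightarrow>
     admissible p (xs @ [x]) \<and> x \<noteq> p-3 \<and> \<not> (x = p-4 \<and> has_cd_prefix p (rev xs))"
  using admissible_snoc[of p "xs @ [x]" "p-3"] by auto

lemma admissible_replicate_0:
  "5 \<le> p \<Longrightarrow> admissible p (replicate n 0 @ xs) \<longleftrightarrow> admissible p xs"
  by (auto simp: admissible_def forbidden_factor_replicate_0)

lemma is_metallic_code_iff:
  "is_metallic_code p ds \<longleftrightarrow> ds \<noteq> [] \<and> last ds \<noteq> 0 \<and> admissible p ds"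
  by (auto simp: is_metallic_code_def admissible_def has_forbidden_factor_iff)

definition admissible_words :: "nat \<Rightarrow> nat \<Rightarrow> nat list set" where
  "admissible_words p k = {xs. length xs = k \<and> admissible p xs}"

definition d_extendable_words :: "nat \<Rightarrow> nat \<Rightarrow> nat list set" where
  "d_extendable_words p k = {xs. length xs = k \<and> admissible p (xs @ [p-3])}"

fun metallic_prev :: "nat \<Rightarrow> nat \<Rightarrow> int" where
  "metallic_prev p 0 = 0"
| "metallic_prev p (Suc k) = metallic p k"

lemma metallic_Suc: "metallic p (Suc k) = (int p - 2) * metallic p k - metallic_prev p k"
  by (cases k) auto

fun word_value_from :: "nat \<Rightarrow> nat \<Rightarrow> nat list \<Rightarrow> int" where
  "word_value_from p s [] = 0"
| "word_value_from p s (x # xs) = int x * metallic p s + word_value_from p (Suc s) xs"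

lemma word_value_from_append:
  "word_value_from p s (xs @ ys) = word_value_from p s xs + word_value_from p (s + length xs) ys"
  by (induction xs arbitrary: s) auto

lemma word_value_from_replicate_0 [simp]: "word_value_from p s (replicate n 0) = 0"
  by (induction n arbitrary: s) auto

lemma word_value_from_sum:
  "word_value_from p s ds = (\<Sum>i<length ds. int (ds ! i) * metallic p (s + i))"
proof (induction ds arbitrary: s)
  case (Cons x ds)
  then show ?case
    by (simp only: length_Cons sum.lessThan_Suc_shift) simp
qed simp

lemma word_value_eq_from: "word_value p ds = word_value_from p 0 ds"
  by (simp add: word_value_def word_value_from_sum)

lemma word_value_snoc:
  "word_value p (xs @ [x]) = word_value p xs + int x * metallic p (length xs)"
  by (simp add: word_value_eq_from word_value_from_append)

fun incr_head :: "nat list \<Rightarrow> nat list" where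
  "incr_head [] = [1]"
| "incr_head (x # xs) = Suc x # xs"

lemma word_value_from_incr_head:
  "word_value_from p s (incr_head v) = metallic p s + word_value_from p s v"
  by (cases v) (auto simp: algebra_simps)

lemma split_leading_digit:
  fixes N m b :: int
  assumes "0 < m" "0 \<le> N" "N < b * m"
  obtains a :: nat and r where "N = int a * m + r" "0 \<le> r" "r < m" "int a < b"
proof
  show "N = int (nat (N div m)) * m + N mod m" "0 \<le> N mod m" "N mod m < m"
    using assms(1,2) by (auto simp: pos_imp_zdiv_nonneg_iff div_mult_mod_eq)
  then have "int (nat (N div m)) * m < b * m"
    using assms(3) by linarith
  then show "int (nat (N div m)) < b"
    using assms(1) by (simp add: mult_less_cancel_right)
qed

locale metallic_numeration =
  fixes p :: nat
  assumes five_le_p: "5 \<le> p"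
begin

lemma of_nat_p_minus_3: "int (p - 3) = int p - 3" and of_nat_p_minus_4: "int (p - 4) = int p - 4"
  using five_le_p by auto

lemma metallic_pos_and_less_Suc: "0 < metallic p k \<and> metallic p k < metallic p (Suc k)"
proof (induction k)
  case 0
  then show ?case using five_le_p by simp
next
  case (Suc k)
  have "3 * metallic p (Suc k) \<le> (int p - 2) * metallic p (Suc k)"
    using Suc five_le_p by (intro mult_right_mono) auto
  moreover have "metallic p (Suc (Suc k)) = (int p - 2) * metallic p (Suc k) - metallic p k"
    by simp
  ultimately show ?case using Suc by linarith
qed

lemma metallic_pos: "0 < metallic p k"
  using metallic_pos_and_less_Suc by blast

lemma strict_mono_metallic: "strict_mono (metallic p)"
  unfolding strict_mono_Suc_iff using metallic_pos_and_less_Suc by blast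

lemma less_metallic: "int k < metallic p k"
proof (induction k)
  case (Suc k)
  then show ?case using strict_monoD[OF strict_mono_metallic, of k "Suc k"] by simp
qed simp

lemma metallic_prev_bounds: "0 \<le> metallic_prev p k \<and> metallic_prev p k \<le> metallic p k"
  by (cases k) (auto simp: metallic_pos less_imp_le strict_monoD[OF strict_mono_metallic])

lemma word_value_nonneg: "0 \<le> word_value p xs"
  unfolding word_value_def by (auto intro!: sum_nonneg simp: metallic_pos less_imp_le)

lemma admissible_word_value_bounds:
  "(admissible p xs \<longrightarrow> word_value p xs < metallic p (length xs)) \<and>
   (admissible p (xs @ [p-3]) \<longrightarrow>
      word_value p xs < metallic p (length xs) - metallic_prev p (length xs))"
proof (induction xs rule: rev_induct)
  case Nil
  then show ?case by (simp add: word_value_def)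
next
  case (snoc a xs)
  let ?m = "metallic p (length xs)" and ?m' = "metallic_prev p (length xs)"
  have rec: "metallic p (Suc (length xs)) = (int p - 2) * ?m - ?m'"
    by (rule metallic_Suc)
  have m': "0 \<le> ?m'" "?m' \<le> ?m"
    using metallic_prev_bounds by auto
  have val: "word_value p (xs @ [a]) = word_value p xs + int a * ?m"
    by (rule word_value_snoc)
  have small_digit: "word_value p (xs @ [a]) < (int p - 3) * ?m - ?m'"
    if "a < p-4" "admissible p xs"
  proof -
    have "int a * ?m \<le> (int p - 5) * ?m"
      using that(1) metallic_pos by (intro mult_right_mono) (auto simp: less_imp_le)
    then show ?thesis
      using that(2) snoc.IH val m' by (simp add: algebra_simps)
  qed
  have "word_value p (xs @ [a]) < metallic p (Suc (length xs))" if "admissible p (xs @ [a])"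
  proof -
    from that have "a \<le> p-3" "admissible p xs"
      by (auto simp: admissible_snoc)
    then consider "a = p-3" | "a = p-4" | "a < p-4"
      by linarith
    then show ?thesis
    proof cases
      case 1
      then show ?thesis
        using that snoc.IH val rec by (simp add: of_nat_p_minus_3 algebra_simps)
    next
      case 2
      then show ?thesis
        using \<open>admissible p xs\<close> snoc.IH val rec m'
        by (simp add: of_nat_p_minus_4 algebra_simps)
    qed (use small_digit \<open>admissible p xs\<close> rec metallic_pos[of "length xs"]
        in \<open>simp add: algebra_simps\<close>)
  qed
  moreover have "word_value p (xs @ [a]) < metallic p (Suc (length xs)) - ?m"
    if adm: "admissible p (xs @ [a, p-3])"
  proof -
    consider "a = p-4" "admissible p (xs @ [p-3])" | "a < p-4" "admissible p xs"
      using adm five_le_p by (cases "a = p-4") (auto simp: admissible_snoc_d admissible_snoc)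
    then show ?thesis
    proof cases
      case 1
      then show ?thesis using snoc.IH val rec by (simp add: of_nat_p_minus_4 algebra_simps)
    qed (use small_digit rec in \<open>simp add: algebra_simps\<close>)
  qed
  ultimately show ?case
    by simp
qed

lemma admissible_word_value_less: "admissible p xs \<Longrightarrow> word_value p xs < metallic p (length xs)"
  using admissible_word_value_bounds by blast

lemma admissible_words_Suc_surj:
  assumes IH: "{0..<metallic p k} \<subseteq> word_value p ` admissible_words p k"
    and IH_d: "{0..<metallic p k - metallic_prev p k} \<subseteq> word_value p ` d_extendable_words p k"
  shows "{0..<metallic p (Suc k)} \<subseteq> word_value p ` admissible_words p (Suc k)"
proof
  fix N assume N: "N \<in> {0..<metallic p (Suc k)}"
  then have "0 \<le> N" "N < (int p - 2) * metallic p k"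
    using metallic_Suc[of p k] metallic_prev_bounds[of k] by (auto simp: algebra_simps)
  then obtain a r where ar: "N = int a * metallic p k + r" "0 \<le> r" "r < metallic p k"
    "int a < int p - 2"
    using metallic_pos by (blast elim: split_leading_digit)
  then consider "a = p-3" | "a < p-3"
    using five_le_p by linarith
  then obtain xs where "xs @ [a] \<in> admissible_words p (Suc k)" "word_value p xs = r"
  proof cases
    case 1
    then have "r < metallic p k - metallic_prev p k"
      using N ar metallic_Suc[of p k] by (simp add: of_nat_p_minus_3 algebra_simps)
    then show ?thesis
      using IH_d ar(2) 1 that by (force simp: admissible_words_def d_extendable_words_def)
  next
    case 2
    then show ?thesis
      using IH ar(2,3) that by (force simp: admissible_words_def admissible_snoc)
  qed
  then show "N \<in> word_value p ` admissible_words p (Suc k)"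
    using ar(1)
    by (intro image_eqI[of _ _ "xs @ [a]"]) (auto simp: admissible_words_def word_value_snoc)
qed

lemma d_extendable_words_Suc_surj:
  assumes IH: "{0..<metallic p k} \<subseteq> word_value p ` admissible_words p k"
    and IH_d: "{0..<metallic p k - metallic_prev p k} \<subseteq> word_value p ` d_extendable_words p k"
  shows "{0..<metallic p (Suc k) - metallic_prev p (Suc k)} \<subseteq>
      word_value p ` d_extendable_words p (Suc k)"
proof
  fix N assume N: "N \<in> {0..<metallic p (Suc k) - metallic_prev p (Suc k)}"
  then have "0 \<le> N" "N < (int p - 3) * metallic p k"
    using metallic_Suc[of p k] metallic_prev_bounds[of k] by (auto simp: algebra_simps)
  then obtain a r where ar: "N = int a * metallic p k + r" "0 \<le> r" "r < metallic p k"
    "int a < int p - 3"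
    using metallic_pos by (blast elim: split_leading_digit)
  then consider "a = p-4" | "a < p-4"
    using five_le_p by linarith
  then obtain xs where "xs @ [a] \<in> d_extendable_words p (Suc k)" "word_value p xs = r"
  proof cases
    case 1
    then have "r < metallic p k - metallic_prev p k"
      using N ar metallic_Suc[of p k] by (simp add: of_nat_p_minus_4 algebra_simps)
    then show ?thesis
      using IH_d ar(2) 1 five_le_p that
      by (force simp: d_extendable_words_def admissible_snoc_d admissible_snoc)
  next
    case 2
    then show ?thesis
      using IH ar(2,3) that by (force simp: admissible_words_def d_extendable_words_def
          admissible_snoc_d admissible_snoc)
  qed
  then show "N \<in> word_value p ` d_extendable_words p (Suc k)"
    using ar(1)
    by (intro image_eqI[of _ _ "xs @ [a]"]) (auto simp: d_extendable_words_def word_value_snoc)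
qed

lemma word_value_admissible_words:
  "word_value p ` admissible_words p k = {0..<metallic p k}"
proof -
  have "{0..<metallic p k} \<subseteq> word_value p ` admissible_words p k \<and>
      {0..<metallic p k - metallic_prev p k} \<subseteq> word_value p ` d_extendable_words p k"
  proof (induction k)
    case 0
    have "[] \<in> admissible_words p 0" "[] \<in> d_extendable_words p 0"
      by (auto simp: admissible_words_def d_extendable_words_def admissible_Cons)
    then show ?case
      by (force simp: word_value_def)
  next
    case (Suc k)
    then show ?case
      using admissible_words_Suc_surj d_extendable_words_Suc_surj by blast
  qed
  moreover have "word_value p ` admissible_words p k \<subseteq> {0..<metallic p k}"
    using admissible_word_value_less word_value_nonneg by (auto simp: admissible_words_def)
  ultimately show ?thesis
    by blast
qed

lemma admissible_word_value_inj:
  assumes "admissible p xs" "admissible p ys" "length xs = length ys"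
    and "word_value p xs = word_value p ys"
  shows "xs = ys"
  using assms
proof (induction xs arbitrary: ys rule: rev_induct)
  case (snoc x xs)
  obtain ys' y where ys: "ys = ys' @ [y]"
    using snoc.prems(3) by (cases ys rule: rev_exhaust) auto
  let ?m = "metallic p (length xs)"
  have len: "length ys' = length xs"
    using ys snoc.prems(3) by simp
  have adm: "admissible p xs" "admissible p ys'"
    using snoc.prems(1,2) ys by (auto simp: admissible_snoc)
  have less: "word_value p xs < ?m" "word_value p ys' < ?m"
    using admissible_word_value_less adm len by metis+
  have nonneg: "0 \<le> word_value p xs" "0 \<le> word_value p ys'"
    by (rule word_value_nonneg)+
  have eq: "word_value p xs + int x * ?m = word_value p ys' + int y * ?m"
    using snoc.prems(4) ys len by (simp add: word_value_snoc)
  have "x = y"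
  proof (rule linorder_cases[of x y])
    assume "x < y"
    then have "int (Suc x) * ?m \<le> int y * ?m"
      using metallic_pos by (intro mult_right_mono) (auto simp: less_imp_le)
    then show ?thesis
      using eq less nonneg by (simp add: algebra_simps)
  next
    assume "y < x"
    then have "int (Suc y) * ?m \<le> int x * ?m"
      using metallic_pos by (intro mult_right_mono) (auto simp: less_imp_le)
    then show ?thesis
      using eq less nonneg by (simp add: algebra_simps)
  qed
  then show ?case
    using snoc.IH adm len eq ys by simp
qed simp

theorem bij_betw_word_value_admissible_words:
  "bij_betw (word_value p) (admissible_words p k) {0..<metallic p k}"
  unfolding bij_betw_def inj_on_def
  using word_value_admissible_words admissible_word_value_inj by (auto simp: admissible_words_def)

lemma is_metallic_code_word_value_bounds:
  assumes "is_metallic_code p xs"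
  shows "metallic p (length xs - 1) \<le> word_value p xs" "word_value p xs < metallic p (length xs)"
proof -
  obtain xs' x where xs: "xs = xs' @ [x]" and "x \<noteq> 0" "admissible p xs"
    using assms by (cases xs rule: rev_exhaust) (auto simp: is_metallic_code_iff)
  then have "metallic p (length xs') \<le> int x * metallic p (length xs')"
    using mult_right_mono[of 1 "int x"] metallic_pos[of "length xs'"] by simp
  then show "metallic p (length xs - 1) \<le> word_value p xs"
    using word_value_nonneg[of xs'] by (simp add: xs word_value_snoc)
  show "word_value p xs < metallic p (length xs)"
    using admissible_word_value_less \<open>admissible p xs\<close> .
qed

lemma is_metallic_code_unique:
  assumes xs: "is_metallic_code p xs" and ys: "is_metallic_code p ys"
    and eq: "word_value p xs = word_value p ys"
  shows "xs = ys"
proof -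
  have "\<not> length xs < length ys" if "is_metallic_code p xs" "is_metallic_code p ys"
    and "word_value p xs = word_value p ys" for xs ys
  proof
    assume "length xs < length ys"
    then have "metallic p (length xs) \<le> metallic p (length ys - 1)"
      by (simp add: strict_mono_less_eq[OF strict_mono_metallic])
    then show False
      using that is_metallic_code_word_value_bounds by fastforce
  qed
  then have "length xs = length ys"
    using xs ys eq by (metis linorder_neqE_nat)
  then show ?thesis
    using xs ys eq bij_betw_imp_inj_on[OF bij_betw_word_value_admissible_words]
    by (auto simp: is_metallic_code_iff admissible_words_def dest: inj_onD)
qed

lemma admissible_strip_zeros:
  "admissible p xs \<Longrightarrow> 0 < word_value p xs \<Longrightarrow>
    \<exists>ys. is_metallic_code p ys \<and> word_value p ys = word_value p xs"
proof (induction xs rule: rev_induct)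
  case (snoc x xs)
  show ?case
  proof (cases "x = 0")
    case True
    then show ?thesis
      using snoc by (simp add: admissible_snoc word_value_snoc)
  next
    case False
    then show ?thesis
      using snoc.prems by (auto simp: is_metallic_code_iff)
  qed
qed (simp add: word_value_def)

lemma metallic_code_exists:
  assumes "1 \<le> N"
  shows "\<exists>ds. is_metallic_code p ds \<and> word_value p ds = N"
proof -
  have "N \<in> {0..<metallic p (nat N)}"
    using assms less_metallic[of "nat N"] by simp
  then obtain xs where "admissible p xs" "word_value p xs = N"
    by (auto simp: bij_betw_imp_surj_on[OF bij_betw_word_value_admissible_words, symmetric]
        admissible_words_def)
  then show ?thesis
    using admissible_strip_zeros assms by fastforce
qed

lemma metallic_code_eqI:
  assumes "is_metallic_code p ds" "word_value p ds = N"
  shows "metallic_code p N = ds"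
  unfolding metallic_code_def
  using assms is_metallic_code_unique by (intro the_equality) auto

lemma metallic_code:
  assumes "1 \<le> N"
  shows "is_metallic_code p (metallic_code p N)" "word_value p (metallic_code p N) = N"
  using metallic_code_exists[OF assms] metallic_code_eqI by auto

section \<open>The codes following a code that ends with 0\<close>

lemma word_value_d_cs: "word_value p ((p-3) # replicate j (p-4)) = metallic p (Suc j) - metallic p j"
proof (induction j)
  case 0
  then show ?case using five_le_p by (simp add: word_value_def)
next
  case (Suc j)
  have "word_value p ((p-3) # replicate (Suc j) (p-4)) =
      word_value p (((p-3) # replicate j (p-4)) @ [p-4])"
    by (simp add: replicate_append_same)
  also have "\<dots> = metallic p (Suc j) - metallic p j + int (p-4) * metallic p (Suc j)"
    by (simp only: word_value_snoc Suc length_Cons length_replicate)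
  also have "\<dots> = metallic p (Suc (Suc j)) - metallic p (Suc j)"
    by (simp add: of_nat_p_minus_4 algebra_simps)
  finally show ?case .
qed

lemma word_value_d_cs_d:
  "word_value p ((p-3) # replicate j (p-4) @ [p-3]) = metallic p (Suc (Suc j))"
proof -
  have "word_value p ((p-3) # replicate j (p-4) @ [p-3]) =
      word_value p ((p-3) # replicate j (p-4)) + int (p-3) * metallic p (Suc j)"
    using word_value_snoc[of p "(p-3) # replicate j (p-4)" "p-3"] by simp
  then show ?thesis
    by (simp add: word_value_d_cs of_nat_p_minus_3 algebra_simps)
qed

lemma is_metallic_code_incr_head:
  assumes "admissible p v" "\<not> has_cd_prefix p v" "v \<noteq> [] \<Longrightarrow> last v \<noteq> 0"
  shows "is_metallic_code p (replicate n 0 @ incr_head v)"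
proof (cases v)
  case Nil
  then show ?thesis
    using five_le_p by (simp add: is_metallic_code_iff admissible_replicate_0 admissible_Cons)
next
  case (Cons x xs)
  then show ?thesis
    using assms five_le_p by (auto simp: is_metallic_code_iff admissible_replicate_0 admissible_Cons)
qed

lemma metallic_code_add_digit:
  assumes "is_metallic_code p (0 # w)" "k \<le> p-3" "\<not> (k = p-3 \<and> has_cd_prefix p w)"
  shows "metallic_code p (word_value p (0 # w) + int k) = k # w"
proof (rule metallic_code_eqI)
  show "is_metallic_code p (k # w)"
    using assms by (auto simp: is_metallic_code_iff admissible_Cons)
  show "word_value p (k # w) = word_value p (0 # w) + int k"
    by (simp add: word_value_eq_from)
qed

lemma metallic_code_carry:
  assumes code: "is_metallic_code p (0 # w)" and w: "w = replicate j (p-4) @ (p-3) # v"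
  shows "metallic_code p (word_value p (0 # w) + int (p-3)) = replicate (Suc (Suc j)) 0 @ incr_head v"
proof (rule metallic_code_eqI)
  have "admissible p ((0 # replicate j (p-4)) @ (p-3) # v)" "v \<noteq> [] \<Longrightarrow> last v \<noteq> 0"
    using code w by (auto simp: is_metallic_code_iff)
  then show "is_metallic_code p (replicate (Suc (Suc j)) 0 @ incr_head v)"
    by (intro is_metallic_code_incr_head) (auto dest: admissible_append_suffix simp: admissible_Cons)
  have "word_value p (0 # w) + int (p-3) =
      word_value p ((p-3) # replicate j (p-4) @ [p-3]) + word_value_from p (Suc (Suc j)) v"
    by (simp add: w word_value_eq_from word_value_from_append)
  also have "\<dots> = metallic p (Suc (Suc j)) + word_value_from p (Suc (Suc j)) v"
    by (simp only: word_value_d_cs_d)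
  also have "\<dots> = word_value p (replicate (Suc (Suc j)) 0 @ incr_head v)"
    by (simp add: word_value_eq_from word_value_from_append word_value_from_incr_head)
  finally show
    "word_value p (replicate (Suc (Suc j)) 0 @ incr_head v) = word_value p (0 # w) + int (p-3)"
    by (rule sym)
qed

lemma metallic_code_no_carry:
  assumes code: "is_metallic_code p (0 # w)" and w: "\<not> has_cd_prefix p w"
  shows "metallic_code p (word_value p (0 # w) + (int p - 2)) = 0 # incr_head w"
proof (rule metallic_code_eqI)
  have "admissible p w" "w \<noteq> [] \<Longrightarrow> last w \<noteq> 0"
    using code by (auto simp: is_metallic_code_iff admissible_Cons)
  then show "is_metallic_code p (0 # incr_head w)"
    using is_metallic_code_incr_head[of w 1] w by simp
  show "word_value p (0 # incr_head w) = word_value p (0 # w) + (int p - 2)"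
    by (simp add: word_value_eq_from word_value_from_incr_head)
qed

lemma level_ge_1: "x \<in> level p n \<Longrightarrow> 1 \<le> x"
  using sum_nonneg[of "{..<n}" "metallic p"] metallic_pos
  by (force simp: level_def Mprev_def less_imp_le)

lemma next_code_ends_with_0:
  assumes "1 \<le> \<mu>" "code_ends_with_0 p \<mu>"
  obtains \<delta> where
    "\<delta> = int p - 3 \<and> code_ends_with_00 p (\<mu> + \<delta>) \<or>
     \<delta> = int p - 2 \<and> \<not> code_ends_with_00 p (\<mu> + \<delta>)"
    "code_ends_with_0 p (\<mu> + \<delta>)" "\<forall>x. \<mu> < x \<and> x < \<mu> + \<delta> \<longrightarrow> \<not> code_ends_with_0 p x"
proof -
  obtain w where "metallic_code p \<mu> = 0 # w"
    using assms(2) by (cases "metallic_code p \<mu>") (auto simp: code_ends_with_0_def)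
  then have code: "is_metallic_code p (0 # w)" and \<mu>: "\<mu> = word_value p (0 # w)"
    using metallic_code[OF assms(1)] by auto
  have gap: "\<not> code_ends_with_0 p x"
    if "\<mu> < x" "x \<le> \<mu> + (int p - 3)" "x = \<mu> + (int p - 3) \<Longrightarrow> \<not> has_cd_prefix p w" for x
  proof -
    define k where "k = nat (x - \<mu>)"
    have "x = \<mu> + int k" "0 < k" "k \<le> p - 3" "\<not> (k = p - 3 \<and> has_cd_prefix p w)"
      using that of_nat_p_minus_3 unfolding k_def by auto
    then show ?thesis
      using metallic_code_add_digit[OF code] \<mu> by (simp add: code_ends_with_0_def)
  qed
  show ?thesis
  proof (cases "has_cd_prefix p w")
    case True
    then obtain j v where "w = replicate j (p-4) @ (p-3) # v"
      by (auto simp: has_cd_prefix_def)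
    then have "metallic_code p (\<mu> + (int p - 3)) = replicate (Suc (Suc j)) 0 @ incr_head v"
      using metallic_code_carry[OF code] \<mu> of_nat_p_minus_3 by simp
    then show ?thesis
      using gap by (intro that[of "int p - 3"])
        (auto simp: code_ends_with_0_def code_ends_with_00_def nth_append)
  next
    case False
    then have "metallic_code p (\<mu> + (int p - 2)) = 0 # incr_head w"
      using metallic_code_no_carry[OF code] \<mu> by simp
    moreover have "incr_head w ! 0 \<noteq> 0"
      by (cases w) auto
    ultimately show ?thesis
      using gap False by (intro that[of "int p - 2"])
        (auto simp: code_ends_with_0_def code_ends_with_00_def)
  qed
qed

end

theorem lemma4:
  fixes p n :: nat and \<mu> \<nu> :: int
  assumes "p \<ge> 5"
    and "\<mu> \<in> level p n" and "\<nu> \<in> level p n" and "\<mu> < \<nu>"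
    and "code_ends_with_0 p \<mu>" and "code_ends_with_0 p \<nu>"
    and "\<forall>x. \<mu> < x \<and> x < \<nu> \<longrightarrow> \<not> code_ends_with_0 p x"
  shows "(\<nu> - \<mu> = int p - 3 \<longleftrightarrow> code_ends_with_00 p \<nu>)
         \<and> (\<not> code_ends_with_00 p \<nu> \<longrightarrow> \<nu> - \<mu> = int p - 2)"
proof -
  interpret metallic_numeration p
    using assms(1) by unfold_locales
  obtain \<delta> where \<delta>:
    "\<delta> = int p - 3 \<and> code_ends_with_00 p (\<mu> + \<delta>) \<or>
     \<delta> = int p - 2 \<and> \<not> code_ends_with_00 p (\<mu> + \<delta>)"
    "code_ends_with_0 p (\<mu> + \<delta>)" "\<forall>x. \<mu> < x \<and> x < \<mu> + \<delta> \<longrightarrow> \<not> code_ends_with_0 p x"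
    using next_code_ends_with_0 level_ge_1 assms(2,5) by blast
  have "\<nu> = \<mu> + \<delta>"
  proof (rule linorder_cases[of \<nu> "\<mu> + \<delta>"])
    assume "\<nu> < \<mu> + \<delta>"
    then show ?thesis using \<delta>(3) assms(4,6) by blast
  next
    assume "\<mu> + \<delta> < \<nu>"
    moreover have "\<mu> < \<mu> + \<delta>" using \<delta>(1) assms(1) by auto
    ultimately show ?thesis using \<delta>(2) assms(7) by blast
  qed
  then show ?thesis
    using \<delta>(1) by auto
qed

end
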